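(* For $m\ge0$ let $p_m(x)=1+\sum_{i=1}^m (ix)^i$. Then $p_m$ has no real root if $m$ is even and exactly one real root (counted with multiplicity) if $m$ is odd. *)

theory Defs
  imports "HOL-Computational_Algebra.Polynomial"
begin

definition pm :: "nat \<Rightarrow> real poly" where
  "pm m = 1 + (\<Sum>i=1..m. monom (real i ^ i) i)"

lemma poly_pm: "poly (pm m) x = 1 + (\<Sum>i=1..m. (real i * x) ^ i)"
  by (simp add: pm_def poly_sum poly_monom power_mult_distrib)

end

(* For x \<ge> 0 all terms of p_m and of its derivative are nonnegative and the
   constant term is 1.  For x = -y < 0 both become alternating sums
   \<Sum> (-1)^i a_i y^i with an odd number of terms, whose coefficient sequences
   a_i = i^i and a_i = (i+1)^(i+2) are log-convex by Bernoulli's inequality; such a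
   sum of a positive log-convex sequence is positive.  So p_m > 0 when m is even,
   while for odd m the derivative is positive: p_m increases strictly, changes sign
   on [-2, 0], and its unique root is simple. *)

theory Submission imports Defs begin

definition log_convex_seq :: "(nat \<Rightarrow> 'a::linordered_idom) \<Rightarrow> bool" where
  "log_convex_seq a \<longleftrightarrow> (\<forall>i. a (Suc i) ^ 2 \<le> a i * a (Suc (Suc i)))"

lemma log_convex_seqD: "log_convex_seq a \<Longrightarrow> a (Suc i) ^ 2 \<le> a i * a (Suc (Suc i))"
  by (simp add: log_convex_seq_def)

lemma log_convex_seq_shift: "log_convex_seq a \<Longrightarrow> log_convex_seq (\<lambda>i. a (Suc i))"
  by (simp add: log_convex_seq_def)

lemma log_convex_seq_mult_power:
  assumes "log_convex_seq a"
  shows "log_convex_seq (\<lambda>i. a i * y ^ i)"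
  unfolding log_convex_seq_def
proof
  fix i
  have "(a (Suc i) * y ^ Suc i) ^ 2 = a (Suc i) ^ 2 * (y ^ Suc i) ^ 2"
    by (simp add: power_mult_distrib)
  also have "\<dots> \<le> a i * a (Suc (Suc i)) * (y ^ Suc i) ^ 2"
    using log_convex_seqD[OF assms] by (rule mult_right_mono) simp
  also have "\<dots> = a i * y ^ i * (a (Suc (Suc i)) * y ^ Suc (Suc i))"
    by (simp add: power2_eq_square algebra_simps)
  finally show "(a (Suc i) * y ^ Suc i) ^ 2 \<le> a i * y ^ i * (a (Suc (Suc i)) * y ^ Suc (Suc i))" .
qed

lemma strict_mono_if_log_convex:
  fixes a :: "nat \<Rightarrow> 'a::linordered_idom"
  assumes "log_convex_seq a" "\<And>i. 0 < a i" "a 0 < a 1"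
  shows "strict_mono a"
  unfolding strict_mono_Suc_iff
proof
  fix i show "a i < a (Suc i)"
  proof (induction i)
    case 0 then show ?case using assms(3) by simp
  next
    case (Suc i)
    have "a (Suc i) * a (Suc i) \<le> a i * a (Suc (Suc i))"
      using log_convex_seqD[OF assms(1)] by (simp add: power2_eq_square)
    also have "\<dots> < a (Suc i) * a (Suc (Suc i))"
      using Suc.IH assms(2) by (simp add: mult_strict_right_mono)
    finally show ?case using assms(2)[of "Suc i"] by simp
  qed
qed

lemma alternating_sum_pos_if_mono:
  fixes a :: "nat \<Rightarrow> 'a::linordered_idom"
  assumes "mono a" "0 < a 0"
  shows "0 < (\<Sum>i\<le>2*n. (-1)^i * a i)"
proof (induction n)
  case 0 then show ?case using assms(2) by simp
next
  case (Suc n)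
  have "a (Suc (2*n)) \<le> a (Suc (Suc (2*n)))"
    using assms(1) by (simp add: mono_iff_le_Suc)
  then show ?case using Suc.IH by simp
qed

lemma alternating_sum_neg_if_mono:
  fixes a :: "nat \<Rightarrow> 'a::linordered_idom"
  assumes "mono a" "a 0 < a 1"
  shows "(\<Sum>i\<le>2*n+1. (-1)^i * a i) < 0"
proof (induction n)
  case 0 then show ?case using assms(2) by simp
next
  case (Suc n)
  have "a (Suc (2*n+1)) \<le> a (Suc (Suc (2*n+1)))"
    using assms(1) by (simp add: mono_iff_le_Suc)
  then show ?case using Suc.IH by simp
qed

text \<open>If the sequence starts increasing it increases for ever, and the pairs
  \<open>a (2j+2) - a (2j+1)\<close> are nonnegative; otherwise \<open>a 0 - a 1 \<ge> 0\<close> and we drop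
  the first two terms.\<close>
lemma alternating_sum_pos_if_log_convex:
  fixes a :: "nat \<Rightarrow> 'a::linordered_idom"
  assumes "log_convex_seq a" "\<And>i. 0 < a i"
  shows "0 < (\<Sum>i\<le>2*n. (-1)^i * a i)"
  using assms
proof (induction n arbitrary: a)
  case 0 then show ?case by simp
next
  case (Suc n)
  show ?case
  proof (cases "a 0 < a 1")
    case True
    have "strict_mono a" by (rule strict_mono_if_log_convex[OF Suc.prems True])
    then show ?thesis
      using Suc.prems(2) by (intro alternating_sum_pos_if_mono) (auto intro: strict_mono_mono)
  next
    case False
    have "(\<Sum>i\<le>2 * Suc n. (-1)^i * a i) = a 0 - a 1 + (\<Sum>i\<le>2*n. (-1)^i * a (Suc (Suc i)))"
      by (simp only: mult_Suc_right add_2_eq_Suc sum.atMost_Suc_shift) simp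
    moreover have "0 < (\<Sum>i\<le>2*n. (-1)^i * a (Suc (Suc i)))"
      using Suc.prems by (intro Suc.IH log_convex_seq_shift) auto
    ultimately show ?thesis using False by simp
  qed
qed

text \<open>With \<open>N = (i+1)^2\<close> we have \<open>N - 1 = i (i+2)\<close>, so Bernoulli's inequality
  \<open>N^e (1 - e/N) \<le> (N - 1)^e\<close> reduces the claim to the polynomial inequality
  \<open>N^2 \<le> (N - e) (i+2)^2\<close>.\<close>
lemma middle_power_le_neighbour_powers:
  assumes "1 \<le> i" "e \<le> i + 1"
  shows "(real (Suc i) ^ Suc e) ^ 2 \<le> real i ^ e * real (Suc (Suc i)) ^ Suc (Suc e)"
proof -
  define N where "N = (real i + 1)^2"
  have N1: "1 \<le> N" unfolding N_def by simp
  have N_eq: "N = 1 + real i * (real i + 2)"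
    unfolding N_def by (simp add: power2_eq_square algebra_simps)
  have "1 + real e * (-1/N) \<le> (1 + (-1/N)) ^ e"
    by (rule Bernoulli_inequality) (use N1 in \<open>simp add: field_simps\<close>)
  also have "1 + (-1/N) = real i * (real i + 2) / N"
    using N1 by (simp add: field_simps) (simp add: N_eq algebra_simps)
  also have "(real i * (real i + 2) / N) ^ e = (real i * (real i + 2)) ^ e / N ^ e"
    by (rule power_divide)
  finally have bernoulli: "N ^ e * (1 - real e / N) \<le> (real i * (real i + 2)) ^ e"
    using N1 by (simp add: field_simps)
  have "N * N \<le> (N - real e) * (real i + 2)^2"
  proof -
    have "(N - (real i + 1)) * (real i + 2)^2 - N * N = real i ^ 3 + 2 * real i ^ 2 - 1"
      unfolding N_def by (simp add: power2_eq_square power3_eq_cube algebra_simps)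
    moreover have "1 \<le> real i ^ 3" "0 \<le> 2 * real i ^ 2" using assms(1) by simp_all
    ultimately have "N * N \<le> (N - (real i + 1)) * (real i + 2)^2"
      by linarith
    also have "\<dots> \<le> (N - real e) * (real i + 2)^2"
      using assms(2) by (intro mult_right_mono) auto
    finally show ?thesis .
  qed
  then have key: "N \<le> (1 - real e / N) * (real i + 2)^2"
    using N1 by (simp add: field_simps)
  have "(real (Suc i) ^ Suc e) ^ 2 = N ^ e * N"
    unfolding N_def of_nat_Suc power_mult[symmetric] power_add[symmetric]
    by (simp add: add.commute mult.commute)
  also have "\<dots> \<le> N ^ e * ((1 - real e / N) * (real i + 2)^2)"
    by (rule mult_left_mono) (use N1 key in simp_all)
  also have "\<dots> \<le> (real i * (real i + 2)) ^ e * (real i + 2)^2"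
    using bernoulli by (simp add: mult.assoc[symmetric] mult_right_mono)
  also have "\<dots> = real i ^ e * real (Suc (Suc i)) ^ Suc (Suc e)"
    by (simp add: power_mult_distrib power2_eq_square add.commute)
  finally show ?thesis .
qed

lemma log_convex_seq_power_self: "log_convex_seq (\<lambda>i. real i ^ i)"
  unfolding log_convex_seq_def
proof
  fix i
  show "(real (Suc i) ^ Suc i) ^ 2 \<le> real i ^ i * real (Suc (Suc i)) ^ Suc (Suc i)"
  proof (cases "i = 0")
    case False
    then show ?thesis by (intro middle_power_le_neighbour_powers) simp_all
  qed simp
qed

lemma log_convex_seq_power_Suc_self: "log_convex_seq (\<lambda>j. real (Suc j) ^ Suc (Suc j))"
  unfolding log_convex_seq_def by (intro allI middle_power_le_neighbour_powers) simp_all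

lemma poly_pm_minus: "poly (pm m) (- y) = (\<Sum>i\<le>m. (-1)^i * (real i ^ i * y ^ i))"
proof -
  have "{..m} = insert 0 {1..m}" by auto
  then show ?thesis
    by (simp add: poly_pm power_mult_distrib[symmetric])
qed

lemma poly_pderiv_pm: "poly (pderiv (pm m)) x = (\<Sum>j<m. real (Suc j) ^ Suc (Suc j) * x ^ j)"
proof -
  have "pderiv (pm m) = (\<Sum>i=1..m. monom (real i ^ Suc i) (i - 1))"
    by (simp add: pm_def pderiv_add pderiv_monom higher_pderiv_sum[of 1, simplified])
  then have "poly (pderiv (pm m)) x = (\<Sum>i=1..m. real i ^ Suc i * x ^ (i - 1))"
    by (simp add: poly_sum poly_monom)
  also have "\<dots> = (\<Sum>j<m. real (Suc j) ^ Suc (Suc j) * x ^ j)"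
    using sum.atLeast1_atMost_eq[of "\<lambda>i. real i ^ Suc i * x ^ (i - 1)" m] by simp
  finally show ?thesis .
qed

lemma poly_pm_pos:
  assumes "even m"
  shows "0 < poly (pm m) x"
proof (cases "0 \<le> x")
  case True
  then show ?thesis by (simp add: poly_pm add_pos_nonneg sum_nonneg)
next
  case False
  obtain k where m: "m = 2*k" using assms by blast
  have "log_convex_seq (\<lambda>i. real i ^ i * (- x) ^ i)"
    by (intro log_convex_seq_mult_power log_convex_seq_power_self)
  moreover have "0 < real i ^ i * (- x) ^ i" for i
    using False by (cases "i = 0") (auto intro!: mult_pos_pos zero_less_power)
  ultimately have "0 < poly (pm m) (- (- x))"
    unfolding poly_pm_minus m by (rule alternating_sum_pos_if_log_convex)
  then show ?thesis by simp
qed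

lemma poly_pderiv_pm_pos:
  assumes "odd m"
  shows "0 < poly (pderiv (pm m)) x"
proof -
  obtain k where m: "m = Suc (2*k)" using assms oddE by fastforce
  show ?thesis
  proof (cases "0 \<le> x")
    case True
    then show ?thesis
      by (simp add: poly_pderiv_pm m lessThan_Suc_eq_insert_0 add_pos_nonneg sum_nonneg)
  next
    case False
    have "log_convex_seq (\<lambda>j. real (Suc j) ^ Suc (Suc j) * (- x) ^ j)"
      by (intro log_convex_seq_mult_power log_convex_seq_power_Suc_self)
    moreover have "0 < real (Suc j) ^ Suc (Suc j) * (- x) ^ j" for j
      using False by simp
    ultimately have "0 < (\<Sum>j\<le>2*k. (-1)^j * (real (Suc j) ^ Suc (Suc j) * (- x) ^ j))"
      by (rule alternating_sum_pos_if_log_convex)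
    also have "\<dots> = (\<Sum>j<m. real (Suc j) ^ Suc (Suc j) * ((-1)^j * (- x) ^ j))"
      unfolding m lessThan_Suc_atMost by (simp only: mult.left_commute)
    also have "\<dots> = poly (pderiv (pm m)) x"
      by (simp add: poly_pderiv_pm flip: power_mult_distrib)
    finally show ?thesis .
  qed
qed

lemma poly_pm_minus_two_neg:
  assumes "odd m"
  shows "poly (pm m) (-2) < 0"
proof -
  obtain k where m: "m = 2*k + 1" using assms oddE by blast
  have "mono (\<lambda>i. real i ^ i * 2 ^ i)"
    unfolding mono_iff_le_Suc
  proof
    fix i
    have "real i ^ i \<le> real (Suc i) ^ i" by (rule power_mono) auto
    also have "\<dots> \<le> real (Suc i) ^ Suc i" by (rule power_increasing) auto
    finally show "real i ^ i * 2 ^ i \<le> real (Suc i) ^ Suc i * 2 ^ Suc i"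
      by (rule mult_mono) auto
  qed
  then show ?thesis
    unfolding poly_pm_minus m by (rule alternating_sum_neg_if_mono) simp
qed

text \<open>The positive derivative makes \<open>p\<close> strictly increasing, so the root is unique,
  and makes that root simple.\<close>
lemma sum_order_roots_eq_1_if_pderiv_pos:
  fixes p :: "real poly"
  assumes "\<And>x. 0 < poly (pderiv p) x" "poly p a < 0" "0 < poly p b"
  shows "(\<Sum>x\<in>{x. poly p x = 0}. order x p) = 1"
proof -
  have increasing: "poly p x < poly p y" if "x < y" for x y
    by (rule DERIV_pos_imp_increasing[OF that]) (use assms(1) poly_DERIV in blast)
  have "a < b"
  proof (rule ccontr)
    assume "\<not> a < b"
    then have "poly p b \<le> poly p a" using increasing[of b a] by (cases "a = b") auto
    then show False using assms(2,3) by simp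
  qed
  then obtain r where r: "poly p r = 0"
    using poly_IVT_pos assms(2,3) by blast
  have "s = r" if "poly p s = 0" for s
    using increasing[of s r] increasing[of r s] that r by (cases s r rule: linorder_cases) auto
  then have roots: "{x. poly p x = 0} = {r}"
    using r by blast
  have "p \<noteq> 0" using assms(2) by auto
  then have "order r p = Suc (order r (pderiv p))" using r by (rule order_pderiv)
  also have "order r (pderiv p) = 0"
    using assms(1)[of r] order_root by (metis less_irrefl)
  finally have "order r p = 1" by simp
  then show ?thesis unfolding roots by simp
qed

theorem theorem8p4:
  fixes m :: nat
  shows "(even m \<longrightarrow> (\<forall>x::real. poly (pm m) x \<noteq> 0))
       \<and> (odd m \<longrightarrow> (\<Sum>x\<in>{x::real. poly (pm m) x = 0}. order x (pm m)) = 1)"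
proof (intro conjI impI allI)
  fix x :: real
  assume "even m"
  then show "poly (pm m) x \<noteq> 0" using poly_pm_pos[of m x] by simp
next
  assume odd: "odd m"
  have "poly (pm m) 0 = 1"
    by (auto simp: poly_pm intro!: sum.neutral)
  then show "(\<Sum>x\<in>{x::real. poly (pm m) x = 0}. order x (pm m)) = 1"
    by (intro sum_order_roots_eq_1_if_pderiv_pos[OF poly_pderiv_pm_pos[OF odd]
          poly_pm_minus_two_neg[OF odd], of 0]) simp
qed

end
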